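(* Let $X$ be a finite-dimensional real Hilbert space, let $C$ be a nonempty closed convex subset of $X$, and let $x\in X$. Then there exists a face $F$ of $C$ such that \[ P_C x = P_{\operatorname{aff} F}\, x . \]
   Context: For a nonempty closed convex set $S\subseteq X$, $P_S$ denotes the orthogonal (nearest-point) projector onto $S$. A subset $F$ of a convex set $C$ is a face of $C$ if whenever $x,y\in C$ and the open segment $]x,y[$ meets $F$, then $x,y\in F$ (in particular $C$ is a face of itself). $\operatorname{aff} F$ denotes the affine hull of $F$, i.e. the smallest affine subspace containing $F$ (which is closed since $X$ is finite-dimensional). *)

theory Defs
  imports "HOL-Analysis.Analysis"
begin

definition is_face :: "'a::real_vector set \<Rightarrow> 'a set \<Rightarrow> bool" where
  "is_face F C \<longleftrightarrow> F \<subseteq> C \<and>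
     (\<forall>x\<in>C. \<forall>y\<in>C. open_segment x y \<inter> F \<noteq> {} \<longrightarrow> x \<in> F \<and> y \<in> F)"

end

theory Submission
  imports Defs
begin

text \<open>The projection \<open>p\<close> of \<open>x\<close> onto \<open>C\<close> lies in the face \<open>F\<close> cut out of \<open>C\<close> by the
  supporting hyperplane through \<open>p\<close> with normal \<open>x - p\<close>. The affine hull of \<open>F\<close> stays inside
  that hyperplane, so \<open>x - p\<close> is orthogonal to it and \<open>p\<close> is also the projection of \<open>x\<close>
  onto \<open>aff F\<close>.\<close>

lemma face_of_imp_is_face: "F face_of C \<Longrightarrow> is_face F C"
  unfolding face_of_def is_face_def by blast

lemma closest_point_eq_if_orthogonal:
  fixes S :: "'a::{real_inner,heine_borel} set"
  assumes "convex S" "closed S" "p \<in> S"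
    and orth: "\<And>y. y \<in> S \<Longrightarrow> orthogonal (x - p) (y - p)"
  shows "closest_point S x = p"
proof (rule closest_point_unique[OF assms(1-3), symmetric], intro ballI)
  fix y assume "y \<in> S"
  have "(norm (x - y))\<^sup>2 = (norm ((x - p) + (p - y)))\<^sup>2"
    by simp
  also have "\<dots> = (norm (x - p))\<^sup>2 + (norm (p - y))\<^sup>2"
    using orth[OF \<open>y \<in> S\<close>]
    by (intro norm_add_Pythagorean) (simp add: orthogonal_def inner_diff_right)
  finally have "(norm (x - p))\<^sup>2 \<le> (norm (x - y))\<^sup>2"
    by simp
  then show "dist x p \<le> dist x y"
    by (simp add: dist_norm power2_le_iff_abs_le)
qed

lemma closest_point_supporting_face:
  fixes C :: "'a::euclidean_space set" and x :: 'a
  assumes "convex C" "closed C"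
  defines "p \<equiv> closest_point C x"
  shows "C \<inter> {y. (x - p) \<bullet> y = (x - p) \<bullet> p} face_of C"
proof (rule face_of_Int_supporting_hyperplane_le[OF assms(1)])
  fix y assume "y \<in> C"
  then show "(x - p) \<bullet> y \<le> (x - p) \<bullet> p"
    using closest_point_dot[OF assms(1,2), of y x]
    by (simp add: p_def inner_diff_right)
qed

theorem corollary2p4:
  fixes C :: "'a::euclidean_space set" and x :: 'a
  assumes "C \<noteq> {}" and "closed C" and "convex C"
  shows "\<exists>F. is_face F C \<and> F \<noteq> {} \<and> closest_point C x = closest_point (affine hull F) x"
proof -
  define p where "p = closest_point C x"
  define H where "H = {y. (x - p) \<bullet> y = (x - p) \<bullet> p}"
  define F where "F = C \<inter> H"
  have "F face_of C"
    using closest_point_supporting_face[OF assms(3,2)] by (simp add: F_def H_def p_def)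
  have "p \<in> F"
    using closest_point_in_set[OF assms(2,1)] by (simp add: F_def H_def p_def)
  have "affine hull F \<subseteq> H"
    by (rule hull_minimal) (auto simp: F_def H_def affine_hyperplane)
  then have "closest_point (affine hull F) x = p"
    using \<open>p \<in> F\<close>
    by (intro closest_point_eq_if_orthogonal)
       (auto simp: affine_imp_convex hull_inc H_def orthogonal_def inner_diff_right)
  then show ?thesis
    using face_of_imp_is_face[OF \<open>F face_of C\<close>] \<open>p \<in> F\<close> by (auto simp: p_def)
qed

end
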